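(* Let $x^*=0\in\Sigma$ be a regular grazing point of order $4$ of an impacting hybrid system $(X,R)$ in local form, and let $\Gamma$ be the orbit of $X$ through $x^*$. Let $\Pi_3=\{x\in\mathbb{R}^n:\ \mathcal{L}_X^3H(x)=0\}$. Then (1) $\Pi_3$ is transverse at $x^*$ to the $(n-1)$-dimensional discontinuity manifold $\Sigma$, and (2) $\Pi_3$ is transverse at $x^*$ to the orbit $\Gamma$.
   Context: Lie derivatives: $\mathcal{L}_XG(x)=\nabla G(x)\cdot X(x)$ and $\mathcal{L}_X^kH=\mathcal{L}_X(\mathcal{L}_X^{k-1}H)$. An impacting hybrid system $(X,R)$ in local form consists of: $\Sigma=\{x:H(x)=0\}$ with $0$ a regular value of the smooth function $H$, $S^+=\{x:H(x)>0\}$, the ODE $x'=X(x)$ for $x\in S^+$ with $X$ a $\mathcal{C}^3$ vector field on $\mathbb{R}^n$, and a reset map $R:\Sigma\to\Sigma$, $R(x)=x+W(x)\mathcal{L}_XH(x)$ with $W:\mathbb{R}^n\to\mathbb{R}^n$ smooth. A point $x^*\in\Sigma$ is a regular grazing point of order $4$ if $\mathcal{L}_XH(x^* )=\mathcal{L}_X^2H(x^* )=\mathcal{L}_X^3H(x^* )=0$ and $\mathcal{L}_X^4H(x^* )\neq0$. *)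

theory Defs
  imports "HOL-Analysis.Analysis"
begin

fun dderiv :: "('a::real_normed_vector \<Rightarrow> 'b::real_normed_vector) \<Rightarrow> 'a list \<Rightarrow> 'a \<Rightarrow> 'b" where
  "dderiv f [] = f"
| "dderiv f (v # vs) = (\<lambda>x. frechet_derivative (dderiv f vs) (at x) v)"

definition Ck :: "nat \<Rightarrow> ('a::real_normed_vector \<Rightarrow> 'b::real_normed_vector) \<Rightarrow> bool" where
  "Ck k f \<longleftrightarrow>
     (\<forall>vs. length vs < k \<longrightarrow> (\<forall>x. dderiv f vs differentiable (at x))) \<and>
     (\<forall>vs. length vs \<le> k \<longrightarrow> continuous_on UNIV (dderiv f vs))"

definition smooth_fun :: "('a::real_normed_vector \<Rightarrow> 'b::real_normed_vector) \<Rightarrow> bool" where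
  "smooth_fun f \<longleftrightarrow> (\<forall>k. Ck k f)"

definition lie_deriv :: "('a::euclidean_space \<Rightarrow> 'a) \<Rightarrow> ('a \<Rightarrow> real) \<Rightarrow> 'a \<Rightarrow> real" where
  "lie_deriv X G = (\<lambda>x. frechet_derivative G (at x) (X x))"

definition lie_pow :: "('a::euclidean_space \<Rightarrow> 'a) \<Rightarrow> nat \<Rightarrow> ('a \<Rightarrow> real) \<Rightarrow> 'a \<Rightarrow> real" where
  "lie_pow X k H = (lie_deriv X ^^ k) H"

definition regular_value :: "('a::euclidean_space \<Rightarrow> real) \<Rightarrow> real \<Rightarrow> bool" where
  "regular_value H c \<longleftrightarrow> (\<forall>x. H x = c \<longrightarrow> surj (frechet_derivative H (at x)))"

text \<open>Tangent space at p of a level set {G = c} (when DG(p) \<noteq> 0): kernel of DG(p).\<close>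
definition level_tangent :: "('a::euclidean_space \<Rightarrow> real) \<Rightarrow> 'a \<Rightarrow> 'a set" where
  "level_tangent G p = {v. frechet_derivative G (at p) v = 0}"

definition transverse_subspaces :: "'a::euclidean_space set \<Rightarrow> 'a set \<Rightarrow> bool" where
  "transverse_subspaces U V \<longleftrightarrow> {u + v | u v. u \<in> U \<and> v \<in> V} = UNIV"

end

theory Submission
  imports Defs
begin

text \<open>Put \<open>f = D(L\<^sup>3\<^sub>X H)(0)\<close> and \<open>g = DH(0)\<close>. Then \<open>f (X 0) = L\<^sup>4\<^sub>X H(0) \<noteq> 0\<close>, so the
  line spanned by \<open>X 0\<close> is complementary to the hyperplane \<open>ker f\<close>; and \<open>g (X 0) = L\<^sub>X H(0) = 0\<close>,
  so \<open>ker g\<close> is a second hyperplane not contained in \<open>ker f\<close>, and two distinct hyperplanes span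
  the space. The only analysis needed is the differentiability of \<open>L\<^sup>3\<^sub>X H\<close> at 0, which holds as
  soon as \<open>H\<close> is \<open>C\<^sup>4\<close> and \<open>X\<close> is \<open>C\<^sup>3\<close>.\<close>

fun differentiable_upto :: "nat \<Rightarrow> ('a::real_normed_vector \<Rightarrow> 'b::real_normed_vector) \<Rightarrow> bool" where
  "differentiable_upto 0 f = True"
| "differentiable_upto (Suc k) f \<longleftrightarrow>
     (\<forall>x. f differentiable (at x)) \<and>
     (\<forall>v. differentiable_upto k (\<lambda>x. frechet_derivative f (at x) v))"

lemma differentiable_upto_Suc_imp: "differentiable_upto (Suc k) f \<Longrightarrow> differentiable_upto k f"
  by (induction k arbitrary: f) auto

lemma differentiable_upto_mono:
  "m \<le> k \<Longrightarrow> differentiable_upto k f \<Longrightarrow> differentiable_upto m f"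
  by (induction k rule: dec_induct) (blast dest: differentiable_upto_Suc_imp)+

lemma dderiv_append: "dderiv (dderiv f [v]) vs = dderiv f (vs @ [v])"
  by (induction vs) auto

lemma differentiable_upto_dderiv:
  assumes "\<And>vs x. length vs < k \<Longrightarrow> dderiv f vs differentiable (at x)"
  shows "differentiable_upto k f"
  using assms
proof (induction k arbitrary: f)
  case 0
  then show ?case by simp
next
  case (Suc k)
  have "differentiable_upto k (dderiv f [v])" for v
    by (rule Suc.IH) (use Suc.prems in \<open>simp only: dderiv_append; simp\<close>)
  moreover have "f differentiable (at x)" for x
    using Suc.prems[of "[]"] by simp
  ultimately show ?case by simp
qed

lemma Ck_imp_differentiable_upto: "Ck k f \<Longrightarrow> differentiable_upto k f"
  unfolding Ck_def by (blast intro: differentiable_upto_dderiv)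

lemma differentiable_upto_const: "differentiable_upto k (\<lambda>x. c)"
  by (induction k arbitrary: c) auto

lemma differentiable_upto_add:
  fixes f g :: "'a::real_normed_vector \<Rightarrow> 'b::real_normed_vector"
  shows "differentiable_upto k f \<Longrightarrow> differentiable_upto k g \<Longrightarrow> differentiable_upto k (\<lambda>x. f x + g x)"
proof (induction k arbitrary: f g)
  case 0
  then show ?case by simp
next
  case (Suc k)
  have "frechet_derivative (\<lambda>x. f x + g x) (at x) v
      = frechet_derivative f (at x) v + frechet_derivative g (at x) v" for x v
  proof -
    have "f differentiable at x" "g differentiable at x"
      using Suc.prems by auto
    then have "((\<lambda>x. f x + g x) has_derivative
        (\<lambda>h. frechet_derivative f (at x) h + frechet_derivative g (at x) h)) (at x)"
      by (intro has_derivative_add) (auto simp: frechet_derivative_works)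
    then show ?thesis by (metis frechet_derivative_at)
  qed
  then show ?case using Suc by simp
qed

lemma differentiable_upto_mult:
  fixes f g :: "'a::real_normed_vector \<Rightarrow> real"
  shows "differentiable_upto k f \<Longrightarrow> differentiable_upto k g \<Longrightarrow> differentiable_upto k (\<lambda>x. f x * g x)"
proof (induction k arbitrary: f g)
  case 0
  then show ?case by simp
next
  case (Suc k)
  have "frechet_derivative (\<lambda>x. f x * g x) (at x) v
      = f x * frechet_derivative g (at x) v + frechet_derivative f (at x) v * g x" for x v
  proof -
    have "f differentiable at x" "g differentiable at x"
      using Suc.prems by auto
    then have "((\<lambda>x. f x * g x) has_derivative
        (\<lambda>h. f x * frechet_derivative g (at x) h + frechet_derivative f (at x) h * g x)) (at x)"
      by (intro has_derivative_mult) (auto simp: frechet_derivative_works)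
    then show ?thesis by (metis frechet_derivative_at)
  qed
  moreover have "differentiable_upto k f" "differentiable_upto k g"
    using Suc.prems by (auto intro: differentiable_upto_Suc_imp)
  ultimately show ?case
    using Suc by (auto intro!: differentiable_upto_add)
qed

lemma differentiable_upto_sum:
  fixes f :: "'i \<Rightarrow> 'a::real_normed_vector \<Rightarrow> 'b::real_normed_vector"
  shows "(\<And>i. i \<in> S \<Longrightarrow> differentiable_upto k (f i)) \<Longrightarrow> differentiable_upto k (\<lambda>x. \<Sum>i\<in>S. f i x)"
  by (induction S rule: infinite_finite_induct)
    (auto simp: differentiable_upto_const differentiable_upto_add)

lemma differentiable_upto_inner_left:
  fixes f :: "'a::real_normed_vector \<Rightarrow> 'b::real_inner"
  shows "differentiable_upto k f \<Longrightarrow> differentiable_upto k (\<lambda>x. f x \<bullet> b)"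
proof (induction k arbitrary: f)
  case 0
  then show ?case by simp
next
  case (Suc k)
  have "frechet_derivative (\<lambda>x. f x \<bullet> b) (at x) v = frechet_derivative f (at x) v \<bullet> b" for x v
  proof -
    have "f differentiable at x"
      using Suc.prems by auto
    then have "((\<lambda>x. f x \<bullet> b) has_derivative (\<lambda>h. frechet_derivative f (at x) h \<bullet> b)) (at x)"
      by (intro has_derivative_inner_left) (auto simp: frechet_derivative_works)
    then show ?thesis by (metis frechet_derivative_at)
  qed
  moreover have "(\<lambda>x. f x \<bullet> b) differentiable at x" for x
    using Suc.prems by auto
  ultimately show ?case using Suc by simp
qed

lemma lie_deriv_eq_sum_Basis:
  assumes "\<And>x. G differentiable (at x)"
  shows "lie_deriv X G = (\<lambda>x. \<Sum>i\<in>Basis. (X x \<bullet> i) * frechet_derivative G (at x) i)"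
proof
  fix x
  have "linear (frechet_derivative G (at x))"
    using assms by (rule linear_frechet_derivative)
  then have "frechet_derivative G (at x) (\<Sum>i\<in>Basis. (X x \<bullet> i) *\<^sub>R i)
      = (\<Sum>i\<in>Basis. (X x \<bullet> i) * frechet_derivative G (at x) i)"
    by (simp add: linear_sum linear_cmul)
  then show "lie_deriv X G x = (\<Sum>i\<in>Basis. (X x \<bullet> i) * frechet_derivative G (at x) i)"
    by (simp add: lie_deriv_def euclidean_representation)
qed

lemma differentiable_upto_lie_deriv:
  assumes "differentiable_upto (Suc k) G" "differentiable_upto k X"
  shows "differentiable_upto k (lie_deriv X G)"
  using assms
  by (auto simp: lie_deriv_eq_sum_Basis
      intro!: differentiable_upto_sum differentiable_upto_mult differentiable_upto_inner_left)

lemma lie_pow_Suc: "lie_pow X (Suc k) H = lie_deriv X (lie_pow X k H)"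
  by (simp add: lie_pow_def)

lemma differentiable_upto_lie_pow:
  assumes "differentiable_upto (m + k) H" "differentiable_upto (m + k - 1) X"
  shows "differentiable_upto m (lie_pow X k H)"
  using assms
proof (induction k arbitrary: m)
  case 0
  then show ?case by (simp add: lie_pow_def)
next
  case (Suc k)
  have "differentiable_upto (Suc m) (lie_pow X k H)"
    using Suc.IH[of "Suc m"] Suc.prems by (simp del: differentiable_upto.simps)
  moreover have "differentiable_upto m X"
    using Suc.prems(2) by (rule differentiable_upto_mono[rotated]) simp
  ultimately show ?case
    unfolding lie_pow_Suc by (rule differentiable_upto_lie_deriv)
qed

lemma transverse_kernel_span:
  fixes f :: "'a::euclidean_space \<Rightarrow> real"
  assumes "linear f" "f v \<noteq> 0"
  shows "transverse_subspaces {w. f w = 0} (span {v})"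
  unfolding transverse_subspaces_def
proof (intro set_eqI iffI UNIV_I)
  fix w
  define c where "c = f w / f v"
  have "f (w - c *\<^sub>R v) = 0"
    using assms by (simp add: c_def linear_diff linear_cmul)
  moreover have "c *\<^sub>R v \<in> span {v}"
    by (simp add: span_base span_mul)
  ultimately show "w \<in> {u + v' |u v'. u \<in> {w. f w = 0} \<and> v' \<in> span {v}}"
    by force
qed

lemma transverse_kernels:
  fixes f g :: "'a::euclidean_space \<Rightarrow> real"
  assumes "linear f" "linear g" "f v \<noteq> 0" "g v = 0" "g p \<noteq> 0"
  shows "transverse_subspaces {w. f w = 0} {w. g w = 0}"
  unfolding transverse_subspaces_def
proof (intro set_eqI iffI UNIV_I)
  fix w
  define q where "q = p - (f p / f v) *\<^sub>R v"
  have "f q = 0" "g q = g p"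
    using assms by (simp_all add: q_def linear_diff linear_cmul)
  define c where "c = g w / g q"
  have "f (c *\<^sub>R q) = 0" "g (w - c *\<^sub>R q) = 0"
    using assms \<open>f q = 0\<close> \<open>g q = g p\<close> by (simp_all add: c_def linear_diff linear_cmul)
  then show "w \<in> {u + v' |u v'. u \<in> {w. f w = 0} \<and> v' \<in> {w. g w = 0}}"
    by (intro CollectI exI[of _ "c *\<^sub>R q"] exI[of _ "w - c *\<^sub>R q"]) simp
qed

theorem proposition1:
  fixes X :: "'a::euclidean_space \<Rightarrow> 'a"
    and H :: "'a \<Rightarrow> real"
    and W :: "'a \<Rightarrow> 'a"
    and R :: "'a \<Rightarrow> 'a"
  assumes X_C3: "Ck 3 X"
    and H_smooth: "smooth_fun H"
    and W_smooth: "smooth_fun W"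
    and regval: "regular_value H 0"
    and R_def: "\<And>x. H x = 0 \<Longrightarrow> R x = x + lie_deriv X H x *\<^sub>R W x"
    and R_maps: "\<And>x. H x = 0 \<Longrightarrow> H (R x) = 0"
    and on_Sigma: "H 0 = 0"
    and graz1: "lie_pow X 1 H 0 = 0"
    and graz2: "lie_pow X 2 H 0 = 0"
    and graz3: "lie_pow X 3 H 0 = 0"
    and graz4: "lie_pow X 4 H 0 \<noteq> 0"
  shows "frechet_derivative (lie_pow X 3 H) (at 0) \<noteq> (\<lambda>v. 0)
         \<and> transverse_subspaces (level_tangent (lie_pow X 3 H) 0) (level_tangent H 0)
         \<and> transverse_subspaces (level_tangent (lie_pow X 3 H) 0) (span {X 0})"
proof -
  define f where "f = frechet_derivative (lie_pow X 3 H) (at 0)"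
  define g where "g = frechet_derivative H (at 0)"
  have H_C4: "differentiable_upto 4 H"
    using H_smooth by (simp add: smooth_fun_def Ck_imp_differentiable_upto)
  then have "differentiable_upto 1 (lie_pow X 3 H)"
    using X_C3 by (intro differentiable_upto_lie_pow) (simp_all add: Ck_imp_differentiable_upto)
  then have "linear f"
    by (simp add: f_def linear_frechet_derivative)
  have "linear g"
    using H_C4 by (simp add: g_def numeral_eq_Suc linear_frechet_derivative)
  have "f (X 0) \<noteq> 0"
    using graz4 lie_pow_Suc[of X 3 H] by (simp add: f_def lie_deriv_def)
  have "g (X 0) = 0"
    using graz1 by (simp add: g_def lie_pow_def lie_deriv_def)
  obtain p where "g p = 1"
    using regval on_Sigma by (metis g_def regular_value_def surj_def)
  then show ?thesis
    using transverse_kernels[OF \<open>linear f\<close> \<open>linear g\<close> \<open>f (X 0) \<noteq> 0\<close> \<open>g (X 0) = 0\<close>, of p]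
      transverse_kernel_span[OF \<open>linear f\<close> \<open>f (X 0) \<noteq> 0\<close>] \<open>f (X 0) \<noteq> 0\<close>
    by (auto simp: level_tangent_def f_def g_def)
qed

end
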